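(* The independence polynomial $Ind(G;x)$ and the clique polynomial $Cl(G;x)$ are both weakly distinguishing; i.e. almost all graphs $G$ have an $Ind$-mate and almost all graphs $G$ have a $Cl$-mate.
   Context: All graphs are finite and simple. For a graph $G$ and $i\ge 1$, let $c_i(G)$ be the number of vertex subsets $A\subseteq V(G)$ with $G[A]$ isomorphic to the complete graph $K_i$, and $s_i(G)$ the number of $A\subseteq V(G)$ with $G[A]$ edgeless on $i$ vertices. Then $Cl(G;x)=1+\sum_{i\ge1} c_i(G)x^i$ and $Ind(G;x)=1+\sum_{i\ge 1}s_i(G)x^i$. For a graph polynomial $P$ (an isomorphism-invariant map from graphs to polynomials), $H$ is a $P$-mate of $G$ if $P(G)=P(H)$ and $H\not\cong G$; $G$ is $P$-unique if it has no $P$-mate. Let $\mathcal{G}(n)$ be the set of isomorphism classes of graphs on $n$ vertices and $U_P(n)$ the set of $P$-unique graphs in $\mathcal{G}(n)$. $P$ is weakly distinguishing if $\lim_{n\to\infty}|U_P(n)|/|\mathcal{G}(n)|=0$. *)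

theory Defs
  imports Complex_Main "HOL-Computational_Algebra.Polynomial"
begin

text \<open>A finite simple graph on vertex set {0..<n} is given by its edge set:
  a set of 2-element subsets of {0..<n}. Every finite simple graph is isomorphic
  to such a graph.\<close>

definition graphs :: "nat \<Rightarrow> nat set set set" where
  "graphs n = {E. E \<subseteq> {e. e \<subseteq> {0..<n} \<and> card e = 2}}"

definition graph_iso :: "nat \<Rightarrow> nat set set \<Rightarrow> nat \<Rightarrow> nat set set \<Rightarrow> bool" where
  "graph_iso n E m F \<longleftrightarrow> (\<exists>f. bij_betw f {0..<n} {0..<m} \<and>
      (\<forall>x\<in>{0..<n}. \<forall>y\<in>{0..<n}. {x, y} \<in> E \<longleftrightarrow> {f x, f y} \<in> F))"

definition iso_classes :: "nat \<Rightarrow> nat set set set set" where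
  "iso_classes n = graphs n // {(E, F). E \<in> graphs n \<and> F \<in> graphs n \<and> graph_iso n E n F}"

definition is_clique :: "nat set set \<Rightarrow> nat set \<Rightarrow> bool" where
  "is_clique E A \<longleftrightarrow> (\<forall>x\<in>A. \<forall>y\<in>A. x \<noteq> y \<longrightarrow> {x, y} \<in> E)"

definition is_indep :: "nat set set \<Rightarrow> nat set \<Rightarrow> bool" where
  "is_indep E A \<longleftrightarrow> (\<forall>x\<in>A. \<forall>y\<in>A. {x, y} \<notin> E)"

definition clique_count :: "nat \<Rightarrow> nat set set \<Rightarrow> nat \<Rightarrow> nat" where
  "clique_count n E i = card {A. A \<subseteq> {0..<n} \<and> card A = i \<and> is_clique E A}"

definition indep_count :: "nat \<Rightarrow> nat set set \<Rightarrow> nat \<Rightarrow> nat" where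
  "indep_count n E i = card {A. A \<subseteq> {0..<n} \<and> card A = i \<and> is_indep E A}"

text \<open>Cl(G;x) = 1 + sum_{i>=1} c_i x^i and Ind(G;x) = 1 + sum_{i>=1} s_i x^i
  (c_i, s_i vanish for i > n).\<close>
definition clique_poly :: "nat \<Rightarrow> nat set set \<Rightarrow> int poly" where
  "clique_poly n E = 1 + (\<Sum>i\<in>{1..n}. monom (int (clique_count n E i)) i)"

definition ind_poly :: "nat \<Rightarrow> nat set set \<Rightarrow> int poly" where
  "ind_poly n E = 1 + (\<Sum>i\<in>{1..n}. monom (int (indep_count n E i)) i)"

definition P_unique :: "(nat \<Rightarrow> nat set set \<Rightarrow> int poly) \<Rightarrow> nat \<Rightarrow> nat set set \<Rightarrow> bool" where
  "P_unique P n E \<longleftrightarrow> (\<forall>m F. F \<in> graphs m \<and> P m F = P n E \<longrightarrow> graph_iso n E m F)"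

definition unique_classes :: "(nat \<Rightarrow> nat set set \<Rightarrow> int poly) \<Rightarrow> nat \<Rightarrow> nat set set set set" where
  "unique_classes P n = {C \<in> iso_classes n. \<forall>E\<in>C. P_unique P n E}"

definition weakly_distinguishing :: "(nat \<Rightarrow> nat set set \<Rightarrow> int poly) \<Rightarrow> bool" where
  "weakly_distinguishing P \<longleftrightarrow>
     (\<lambda>n. real (card (unique_classes P n)) / real (card (iso_classes n))) \<longlonglongrightarrow> 0"

end

(*
  A P-unique class is determined by its polynomial, so |U_P(n)| is at most the number of
  values P takes on graphs with n vertices, whereas there are at least 2^(n choose 2) / n!
  isomorphism classes.  For Ind and Cl the coefficient of x^i counts the i-sets with a
  hereditary property (independent, resp. complete).  Put k = n div 4.  If a graph has no
  such set of size k + 1, its polynomial is determined by the k numbers c_1, ..., c_k in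
  [0, 2^n], so these graphs give at most (2^n + 1)^k polynomials.  Fixing the edges inside
  one (k+1)-set shows that at most 2^n * 2^((n choose 2) - (k+1 choose 2)) graphs have
  such a set.  Both bounds are o(2^(n choose 2) / n!).
*)

theory Submission
  imports Defs "HOL-Combinatorics.Permutations" "HOL-Real_Asymp.Real_Asymp"
begin

definition pairs :: "nat set \<Rightarrow> nat set set" where
  "pairs A = {e. e \<subseteq> A \<and> card e = 2}"

lemma pairs_mono: "A \<subseteq> B \<Longrightarrow> pairs A \<subseteq> pairs B"
  by (auto simp: pairs_def)

lemma finite_pairs: "finite A \<Longrightarrow> finite (pairs A)"
  unfolding pairs_def by (rule finite_subset[of _ "Pow A"]) auto

lemma card_pairs: "finite A \<Longrightarrow> card (pairs A) = card A choose 2"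
  unfolding pairs_def by (rule n_subsets)

lemma graphs_eq_Pow_pairs: "graphs n = Pow (pairs {0..<n})"
  by (auto simp: graphs_def pairs_def)

lemma finite_graphs: "finite (graphs n)"
  by (simp add: graphs_eq_Pow_pairs finite_pairs)

lemma card_graphs: "card (graphs n) = 2 ^ (n choose 2)"
  by (simp add: graphs_eq_Pow_pairs card_Pow finite_pairs card_pairs)

lemma graphs_edgeE:
  assumes "E \<in> graphs n" "e \<in> E"
  obtains x y where "x \<in> {0..<n}" "y \<in> {0..<n}" "e = {x, y}"
  using assms unfolding graphs_def card_2_iff by blast

definition iso_rel :: "nat \<Rightarrow> (nat set set \<times> nat set set) set" where
  "iso_rel n = {(E, F). E \<in> graphs n \<and> F \<in> graphs n \<and> graph_iso n E n F}"

lemma iso_classes_eq_quotient: "iso_classes n = graphs n // iso_rel n"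
  by (simp add: iso_classes_def iso_rel_def)

lemma graph_iso_refl: "graph_iso n E n E"
  unfolding graph_iso_def by (rule exI[of _ id]) auto

lemma graph_iso_sym:
  assumes "graph_iso n E m F"
  shows "graph_iso m F n E"
proof -
  obtain f where f: "bij_betw f {0..<n} {0..<m}"
    and iso: "\<forall>x\<in>{0..<n}. \<forall>y\<in>{0..<n}. {x, y} \<in> E \<longleftrightarrow> {f x, f y} \<in> F"
    using assms unfolding graph_iso_def by blast
  define g where "g = inv_into {0..<n} f"
  have g: "bij_betw g {0..<m} {0..<n}"
    unfolding g_def using f by (rule bij_betw_inv_into)
  have "{x, y} \<in> F \<longleftrightarrow> {g x, g y} \<in> E" if "x \<in> {0..<m}" "y \<in> {0..<m}" for x y
    using iso bij_betwE[OF g] bij_betw_inv_into_right[OF f] that by (simp add: g_def)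
  with g show ?thesis
    unfolding graph_iso_def by blast
qed

lemma graph_iso_trans:
  assumes "graph_iso n E m F" "graph_iso m F l G"
  shows "graph_iso n E l G"
proof -
  obtain f where f: "bij_betw f {0..<n} {0..<m}"
    and iso_f: "\<forall>x\<in>{0..<n}. \<forall>y\<in>{0..<n}. {x, y} \<in> E \<longleftrightarrow> {f x, f y} \<in> F"
    using assms(1) unfolding graph_iso_def by blast
  obtain g where g: "bij_betw g {0..<m} {0..<l}"
    and iso_g: "\<forall>x\<in>{0..<m}. \<forall>y\<in>{0..<m}. {x, y} \<in> F \<longleftrightarrow> {g x, g y} \<in> G"
    using assms(2) unfolding graph_iso_def by blast
  have "{x, y} \<in> E \<longleftrightarrow> {(g \<circ> f) x, (g \<circ> f) y} \<in> G" if "x \<in> {0..<n}" "y \<in> {0..<n}" for x y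
    using iso_f iso_g bij_betwE[OF f] that by simp
  with bij_betw_trans[OF f g] show ?thesis
    unfolding graph_iso_def by blast
qed

lemma equiv_iso_rel: "equiv (graphs n) (iso_rel n)"
  unfolding equiv_def refl_on_def sym_def trans_def iso_rel_def
  using graph_iso_refl graph_iso_sym graph_iso_trans by blast

lemma iso_class_subset_permuted:
  assumes E: "E \<in> graphs n"
  shows "iso_rel n `` {E} \<subseteq> (\<lambda>p. (`) p ` E) ` {p. p permutes {0..<n}}"
proof
  fix F assume "F \<in> iso_rel n `` {E}"
  then have F: "F \<in> graphs n" and "graph_iso n E n F"
    by (auto simp: iso_rel_def)
  then obtain f where f: "bij_betw f {0..<n} {0..<n}"
    and iso: "\<forall>x\<in>{0..<n}. \<forall>y\<in>{0..<n}. {x, y} \<in> E \<longleftrightarrow> {f x, f y} \<in> F"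
    unfolding graph_iso_def by blast
  define p where "p x = (if x < n then f x else x)" for x
  have p_eq: "p x = f x" if "x \<in> {0..<n}" for x
    using that by (simp add: p_def)
  have "bij_betw p {0..<n} {0..<n}"
    using f p_eq bij_betw_cong by blast
  then have p: "p permutes {0..<n}"
    by (rule bij_imp_permutes) (simp add: p_def)
  have "F \<subseteq> (`) p ` E"
  proof
    fix e assume "e \<in> F"
    then obtain a b where ab: "a \<in> {0..<n}" "b \<in> {0..<n}" "e = {a, b}"
      using F by (blast elim: graphs_edgeE)
    moreover have "f ` {0..<n} = {0..<n}"
      using f by (rule bij_betw_imp_surj_on)
    ultimately have "a \<in> f ` {0..<n}" "b \<in> f ` {0..<n}"
      by simp_all
    then obtain x y where xy: "x \<in> {0..<n}" "y \<in> {0..<n}" "a = f x" "b = f y"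
      by (elim imageE)
    have "{f x, f y} \<in> F"
      using \<open>e \<in> F\<close> ab xy by simp
    then have "{x, y} \<in> E"
      using iso xy by blast
    moreover have "e = p ` {x, y}"
      using xy ab p_eq by simp
    ultimately show "e \<in> (`) p ` E"
      by blast
  qed
  moreover have "(`) p ` E \<subseteq> F"
  proof
    fix e' assume "e' \<in> (`) p ` E"
    then obtain e where e: "e \<in> E" "e' = p ` e"
      by blast
    then obtain x y where xy: "x \<in> {0..<n}" "y \<in> {0..<n}" "e = {x, y}"
      using E by (blast elim: graphs_edgeE)
    have "{f x, f y} \<in> F"
      using iso xy e by simp
    then show "e' \<in> F"
      using xy e p_eq by simp
  qed
  ultimately show "F \<in> (\<lambda>p. (`) p ` E) ` {p. p permutes {0..<n}}"
    using p by blast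
qed

lemma card_iso_class_le_fact:
  assumes "C \<in> iso_classes n"
  shows "card C \<le> fact n"
proof -
  obtain E where E: "E \<in> graphs n" "C = iso_rel n `` {E}"
    using assms by (auto simp: iso_classes_eq_quotient elim: quotientE)
  have "card C \<le> card ((\<lambda>p. (`) p ` E) ` {p. p permutes {0..<n}})"
    using iso_class_subset_permuted[OF E(1)] E(2) by (intro card_mono) (auto intro: finite_permutations)
  also have "\<dots> \<le> card {p. p permutes {0..<n}}"
    by (rule card_image_le) (auto intro: finite_permutations)
  also have "\<dots> = fact n"
    by (rule card_permutations) auto
  finally show ?thesis .
qed

lemma card_graphs_le_card_iso_classes: "2 ^ (n choose 2) \<le> card (iso_classes n) * fact n"
proof -
  have "2 ^ (n choose 2) = card (\<Union> (iso_classes n))"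
    using Union_quotient[OF equiv_iso_rel] by (simp add: iso_classes_eq_quotient card_graphs)
  also have "\<dots> \<le> (\<Sum>C\<in>iso_classes n. card C)"
    by (rule card_Union_le_sum_card)
  also have "\<dots> \<le> card (iso_classes n) * fact n"
    using sum_bounded_above[of "iso_classes n" card "fact n"] card_iso_class_le_fact by auto
  finally show ?thesis .
qed

lemma card_unique_classes_le: "card (unique_classes P n) \<le> card (P n ` graphs n)"
proof -
  define rep :: "nat set set set \<Rightarrow> nat set set" where "rep C = (SOME E. E \<in> C)" for C
  have rep: "rep C \<in> C" "rep C \<in> graphs n" if "C \<in> iso_classes n" for C
  proof -
    have "C \<noteq> {}" "C \<subseteq> graphs n"
      using that equiv_iso_rel in_quotient_imp_non_empty in_quotient_imp_subset
      by (fastforce simp: iso_classes_eq_quotient)+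
    then show "rep C \<in> C" "rep C \<in> graphs n"
      using some_in_eq by (auto simp: rep_def)
  qed
  have "inj_on (P n \<circ> rep) (unique_classes P n)"
  proof (rule inj_onI)
    fix C D assume C: "C \<in> unique_classes P n" and D: "D \<in> unique_classes P n"
      and eq: "(P n \<circ> rep) C = (P n \<circ> rep) D"
    have "P_unique P n (rep C)"
      using C rep by (auto simp: unique_classes_def)
    then have "graph_iso n (rep C) n (rep D)"
      using eq rep D unfolding P_unique_def unique_classes_def by auto
    moreover have "C \<in> iso_classes n" "D \<in> iso_classes n"
      using C D by (auto simp: unique_classes_def)
    ultimately show "C = D"
      using quotient_eq_iff[OF equiv_iso_rel, of C n D "rep C" "rep D"] rep
      by (simp add: iso_classes_eq_quotient iso_rel_def)
  qed
  moreover have "(P n \<circ> rep) ` unique_classes P n \<subseteq> P n ` graphs n"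
    using rep by (auto simp: unique_classes_def)
  ultimately show ?thesis
    by (rule card_inj_on_le) (simp add: finite_graphs)
qed

definition graphs_with ::
  "(nat set set \<Rightarrow> nat set \<Rightarrow> bool) \<Rightarrow> nat \<Rightarrow> nat \<Rightarrow> nat set set set" where
  "graphs_with Q n j = {E \<in> graphs n. \<exists>A \<subseteq> {0..<n}. card A = j \<and> Q E A}"

lemma card_graphs_trace:
  assumes "A \<subseteq> {0..<n}" "S \<subseteq> pairs A"
  shows "card {E \<in> graphs n. E \<inter> pairs A = S} = 2 ^ ((n choose 2) - (card A choose 2))"
proof -
  have sub: "pairs A \<subseteq> pairs {0..<n}"
    using assms(1) by (rule pairs_mono)
  have "bij_betw (\<lambda>E. E - pairs A) {E \<in> graphs n. E \<inter> pairs A = S} (Pow (pairs {0..<n} - pairs A))"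
    by (rule bij_betwI[where g = "\<lambda>Y. Y \<union> S"])
      (use sub assms(2) in \<open>auto simp: graphs_eq_Pow_pairs\<close>)
  then have "card {E \<in> graphs n. E \<inter> pairs A = S} = 2 ^ card (pairs {0..<n} - pairs A)"
    by (simp add: bij_betw_same_card card_Pow finite_pairs)
  also have "card (pairs {0..<n} - pairs A) = (n choose 2) - (card A choose 2)"
    using sub assms(1) by (simp add: card_Diff_subset finite_pairs card_pairs finite_subset)
  finally show ?thesis .
qed

lemma card_graphs_with_le:
  assumes trace: "\<And>E A. E \<in> graphs n \<Longrightarrow> A \<subseteq> {0..<n} \<Longrightarrow> Q E A \<Longrightarrow> E \<inter> pairs A = S A"
    and S: "\<And>A. S A \<subseteq> pairs A"
  shows "card (graphs_with Q n j) \<le> (n choose j) * 2 ^ ((n choose 2) - (j choose 2))"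
proof -
  define As where "As = {A. A \<subseteq> {0..<n} \<and> card A = j}"
  have "graphs_with Q n j \<subseteq> (\<Union>A\<in>As. {E \<in> graphs n. E \<inter> pairs A = S A})"
    using trace by (auto simp: graphs_with_def As_def)
  then have "card (graphs_with Q n j) \<le> card (\<Union>A\<in>As. {E \<in> graphs n. E \<inter> pairs A = S A})"
    by (rule card_mono[rotated]) (simp add: As_def finite_graphs)
  also have "\<dots> \<le> (\<Sum>A\<in>As. card {E \<in> graphs n. E \<inter> pairs A = S A})"
    by (rule card_UN_le) (simp add: As_def)
  also have "\<dots> = (\<Sum>A\<in>As. 2 ^ ((n choose 2) - (j choose 2)))"
    using card_graphs_trace S by (intro sum.cong) (auto simp: As_def)
  also have "\<dots> = (n choose j) * 2 ^ ((n choose 2) - (j choose 2))"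
    by (simp add: As_def n_subsets)
  finally show ?thesis .
qed

lemma card_graphs_with_indep_le:
  "card (graphs_with is_indep n j) \<le> (n choose j) * 2 ^ ((n choose 2) - (j choose 2))"
  by (rule card_graphs_with_le[where S = "\<lambda>_. {}"]) (auto simp: is_indep_def pairs_def card_2_iff)

lemma card_graphs_with_clique_le:
  "card (graphs_with is_clique n j) \<le> (n choose j) * 2 ^ ((n choose 2) - (j choose 2))"
  by (rule card_graphs_with_le[where S = pairs]) (auto simp: is_clique_def pairs_def card_2_iff)

definition subset_count ::
  "(nat set set \<Rightarrow> nat set \<Rightarrow> bool) \<Rightarrow> nat \<Rightarrow> nat set set \<Rightarrow> nat \<Rightarrow> nat" where
  "subset_count Q n E i = card {A. A \<subseteq> {0..<n} \<and> card A = i \<and> Q E A}"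

definition hereditary :: "(nat set set \<Rightarrow> nat set \<Rightarrow> bool) \<Rightarrow> bool" where
  "hereditary Q \<longleftrightarrow> (\<forall>E A B. Q E A \<longrightarrow> B \<subseteq> A \<longrightarrow> Q E B)"

lemma hereditary_is_indep: "hereditary is_indep"
  unfolding hereditary_def is_indep_def by blast

lemma hereditary_is_clique: "hereditary is_clique"
  unfolding hereditary_def is_clique_def by blast

lemma subset_count_le: "subset_count Q n E i \<le> 2 ^ n"
proof -
  have "subset_count Q n E i \<le> card (Pow {0..<n})"
    unfolding subset_count_def by (rule card_mono) auto
  then show ?thesis
    by (simp add: card_Pow)
qed

lemma subset_count_eq_0:
  assumes "hereditary Q" "E \<notin> graphs_with Q n j" "E \<in> graphs n" "j \<le> i"
  shows "subset_count Q n E i = 0"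
proof -
  have "\<not> (A \<subseteq> {0..<n} \<and> card A = i \<and> Q E A)" for A
  proof
    assume A: "A \<subseteq> {0..<n} \<and> card A = i \<and> Q E A"
    then obtain B where "B \<subseteq> A" "card B = j"
      using obtain_subset_with_card_n assms(4) by metis
    with A assms show False
      unfolding hereditary_def graphs_with_def by blast
  qed
  then show ?thesis
    by (simp add: subset_count_def)
qed

lemma card_image_poly_le:
  assumes P: "\<And>E. P n E = 1 + (\<Sum>i\<in>{1..n}. monom (int (subset_count Q n E i)) i)"
    and "hereditary Q" "k \<le> n"
  shows "card (P n ` graphs n) \<le> (2 ^ n + 1) ^ k + card (graphs_with Q n (k + 1))"
proof -
  let ?W = "graphs_with Q n (k + 1)"
  define poly_of :: "(nat \<Rightarrow> nat) \<Rightarrow> int poly" where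
    "poly_of c = 1 + (\<Sum>i\<in>{1..k}. monom (int (c i)) i)" for c
  have "P n ` (graphs n - ?W) \<subseteq> poly_of ` (\<Pi>\<^sub>E i\<in>{1..k}. {0..2 ^ n})"
  proof
    fix p assume "p \<in> P n ` (graphs n - ?W)"
    then obtain E where E: "E \<in> graphs n" "E \<notin> ?W" and p: "p = P n E"
      by blast
    have "P n E = 1 + (\<Sum>i\<in>{1..k}. monom (int (subset_count Q n E i)) i)"
      unfolding P using assms(2,3) E subset_count_eq_0
      by (intro arg_cong[where f = "(+) 1"] sum.mono_neutral_right) auto
    also have "\<dots> = poly_of (restrict (subset_count Q n E) {1..k})"
      by (simp add: poly_of_def)
    finally show "p \<in> poly_of ` (\<Pi>\<^sub>E i\<in>{1..k}. {0..2 ^ n})"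
      using p subset_count_le by auto
  qed
  then have "card (P n ` (graphs n - ?W)) \<le> card (poly_of ` (\<Pi>\<^sub>E i\<in>{1..k}. {0..2 ^ n}))"
    by (rule card_mono[rotated]) (simp add: finite_PiE)
  also have "\<dots> \<le> card (\<Pi>\<^sub>E i\<in>{1..k}. {0..(2::nat) ^ n})"
    by (rule card_image_le) (simp add: finite_PiE)
  also have "\<dots> = (2 ^ n + 1) ^ k"
    by (simp add: card_PiE)
  finally have good: "card (P n ` (graphs n - ?W)) \<le> (2 ^ n + 1) ^ k" .
  have "card (P n ` graphs n) \<le> card (P n ` (graphs n - ?W)) + card (P n ` ?W)"
    by (rule order_trans[OF card_mono card_Un_le]) (auto simp: finite_graphs graphs_with_def)
  also have "card (P n ` ?W) \<le> card ?W"
    by (rule card_image_le) (simp add: graphs_with_def finite_graphs)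
  finally show ?thesis
    using good by linarith
qed

lemma real_choose_two: "real (m choose 2) = real m * (real m - 1) / 2"
  by (induction m) (simp_all add: numeral_2_eq_2 field_simps)

lemma two_pow_eq_powr: "(2::real) ^ m = 2 powr real m"
  by (simp add: powr_realpow)

lemma fact_le_powr: "0 < n \<Longrightarrow> fact n \<le> real n powr real n"
  using fact_le_power[of n] by (simp add: powr_realpow)

lemma tendsto_fact_mult_pow_div_pow_choose:
  "(\<lambda>n. fact n * real ((2 ^ n + 1) ^ (n div 4)) / 2 ^ (n choose 2)) \<longlonglongrightarrow> 0"
proof (rule tendsto_sandwich[OF _ _ tendsto_const])
  let ?g = "\<lambda>x::real. x powr x * 2 powr ((x + 1) * x / 4) / 2 powr (x * (x - 1) / 2)"
  have "(?g \<longlongrightarrow> 0) at_top"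
    by real_asymp
  then show "(\<lambda>n. ?g (real n)) \<longlonglongrightarrow> 0"
    by (rule filterlim_compose[OF _ filterlim_real_sequentially])
  show "\<forall>\<^sub>F n in sequentially. fact n * real ((2 ^ n + 1) ^ (n div 4)) / 2 ^ (n choose 2) \<le> ?g (real n)"
  proof (rule eventually_sequentiallyI[of 1])
    fix n :: nat assume "1 \<le> n"
    have "real ((2 ^ n + 1) ^ (n div 4)) = (2 ^ n + 1) ^ (n div 4)"
      by (simp add: add.commute)
    also have "\<dots> \<le> (2 ^ (n + 1)) ^ (n div 4)"
      by (intro power_mono) simp_all
    also have "\<dots> = 2 ^ ((n + 1) * (n div 4))"
      by (rule power_mult[symmetric])
    also have "\<dots> = 2 powr ((real n + 1) * real (n div 4))"
      by (simp add: two_pow_eq_powr algebra_simps)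
    also have "\<dots> \<le> 2 powr ((real n + 1) * real n / 4)"
      by (intro powr_mono) (simp_all add: le_divide_eq)
    finally have "real ((2 ^ n + 1) ^ (n div 4)) \<le> 2 powr ((real n + 1) * real n / 4)" .
    moreover have "fact n \<le> real n powr real n"
      using \<open>1 \<le> n\<close> by (intro fact_le_powr) simp
    moreover have "(2::real) ^ (n choose 2) = 2 powr (real n * (real n - 1) / 2)"
      by (simp add: two_pow_eq_powr real_choose_two)
    ultimately show "fact n * real ((2 ^ n + 1) ^ (n div 4)) / 2 ^ (n choose 2) \<le> ?g (real n)"
      by (auto intro!: divide_right_mono mult_mono)
  qed
qed simp

lemma tendsto_fact_mult_pow_div_pow_choose_quarter:
  "(\<lambda>n. fact n * 2 ^ n / 2 ^ ((n div 4 + 1) choose 2) :: real) \<longlonglongrightarrow> 0"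
proof (rule tendsto_sandwich[OF _ _ tendsto_const])
  let ?g = "\<lambda>x::real. x powr x * 2 powr x / 2 powr ((x / 4) * (x / 4 - 1) / 2)"
  have "(?g \<longlongrightarrow> 0) at_top"
    by real_asymp
  then show "(\<lambda>n. ?g (real n)) \<longlonglongrightarrow> 0"
    by (rule filterlim_compose[OF _ filterlim_real_sequentially])
  show "\<forall>\<^sub>F n in sequentially. fact n * 2 ^ n / 2 ^ ((n div 4 + 1) choose 2) \<le> ?g (real n)"
  proof (rule eventually_sequentiallyI[of 4])
    fix n :: nat assume "4 \<le> n"
    define k where "k = n div 4"
    have "real n / 4 \<le> real k + 1" "real n / 4 - 1 \<le> real k" "0 \<le> real n / 4 - 1"
      using \<open>4 \<le> n\<close> by (simp_all add: k_def)
    then have "(real n / 4) * (real n / 4 - 1) \<le> (real k + 1) * real k"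
      by (intro mult_mono) simp_all
    then have "(real n / 4) * (real n / 4 - 1) / 2 \<le> real ((k + 1) choose 2)"
      by (simp add: real_choose_two add.commute)
    then have "2 powr ((real n / 4) * (real n / 4 - 1) / 2) \<le> 2 ^ ((k + 1) choose 2)"
      by (simp add: two_pow_eq_powr)
    moreover have "fact n \<le> real n powr real n"
      using \<open>4 \<le> n\<close> by (intro fact_le_powr) simp
    ultimately show "fact n * 2 ^ n / 2 ^ ((n div 4 + 1) choose 2) \<le> ?g (real n)"
      unfolding k_def by (intro frac_le mult_mono) (simp_all add: two_pow_eq_powr)
  qed
qed simp

lemma card_unique_classes_le_bound:
  assumes P: "\<And>n E. P n E = 1 + (\<Sum>i\<in>{1..n}. monom (int (subset_count Q n E i)) i)"
    and "hereditary Q"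
    and W: "\<And>n j. card (graphs_with Q n j) \<le> (n choose j) * 2 ^ ((n choose 2) - (j choose 2))"
    and "k < n"
  shows "real (card (unique_classes P n))
    \<le> (2 ^ n + 1) ^ k + 2 ^ n * (2 ^ (n choose 2) / 2 ^ ((k + 1) choose 2))"
proof -
  have "card (unique_classes P n) \<le> card (P n ` graphs n)"
    by (rule card_unique_classes_le)
  also have "\<dots> \<le> (2 ^ n + 1) ^ k + card (graphs_with Q n (k + 1))"
    using \<open>k < n\<close> by (intro card_image_poly_le P \<open>hereditary Q\<close>) simp
  also have "\<dots> \<le> (2 ^ n + 1) ^ k + 2 ^ n * 2 ^ ((n choose 2) - ((k + 1) choose 2))"
    using W[of n "k + 1"] binomial_le_pow2[of n "k + 1"]
    by (meson add_left_mono mult_le_mono1 order_trans)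
  finally have "real (card (unique_classes P n))
      \<le> real ((2 ^ n + 1) ^ k + 2 ^ n * 2 ^ ((n choose 2) - ((k + 1) choose 2)))"
    by (rule of_nat_mono)
  moreover have "(2::real) ^ ((n choose 2) - ((k + 1) choose 2)) = 2 ^ (n choose 2) / 2 ^ ((k + 1) choose 2)"
    using binomial_right_mono[of "k + 1" n 2] \<open>k < n\<close> by (simp add: power_diff)
  ultimately show ?thesis
    by (simp add: add.commute)
qed

lemma weakly_distinguishing_if_hereditary:
  assumes P: "\<And>n E. P n E = 1 + (\<Sum>i\<in>{1..n}. monom (int (subset_count Q n E i)) i)"
    and "hereditary Q"
    and W: "\<And>n j. card (graphs_with Q n j) \<le> (n choose j) * 2 ^ ((n choose 2) - (j choose 2))"
  shows "weakly_distinguishing P"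
  unfolding weakly_distinguishing_def
proof (rule tendsto_sandwich[OF _ _ tendsto_const])
  let ?b = "\<lambda>n. fact n * real ((2 ^ n + 1) ^ (n div 4)) / 2 ^ (n choose 2)
    + fact n * 2 ^ n / 2 ^ ((n div 4 + 1) choose 2)"
  show "?b \<longlonglongrightarrow> 0"
    using tendsto_add[OF tendsto_fact_mult_pow_div_pow_choose
        tendsto_fact_mult_pow_div_pow_choose_quarter] by simp
  show "\<forall>\<^sub>F n in sequentially.
    real (card (unique_classes P n)) / real (card (iso_classes n)) \<le> ?b n"
  proof (rule eventually_sequentiallyI[of 1])
    fix n :: nat assume "1 \<le> n"
    define N :: real where "N = 2 ^ (n choose 2)"
    have "real (2 ^ (n choose 2)) \<le> real (card (iso_classes n) * fact n)"
      using card_graphs_le_card_iso_classes by (rule of_nat_mono)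
    then have classes: "N / fact n \<le> real (card (iso_classes n))"
      by (simp add: N_def divide_le_eq)
    have "0 < N"
      by (simp add: N_def)
    have "real (card (unique_classes P n)) / real (card (iso_classes n))
        \<le> real (card (unique_classes P n)) / (N / fact n)"
      using classes \<open>0 < N\<close> by (intro frac_le) simp_all
    also have "\<dots> \<le> (real ((2 ^ n + 1) ^ (n div 4))
        + 2 ^ n * (N / 2 ^ ((n div 4 + 1) choose 2))) / (N / fact n)"
      using card_unique_classes_le_bound[OF P \<open>hereditary Q\<close> W, of "n div 4" n]
        \<open>1 \<le> n\<close> \<open>0 < N\<close>
      by (intro divide_right_mono) (simp_all add: N_def add.commute)
    also have "\<dots> = ?b n"
      using \<open>0 < N\<close> by (simp add: N_def field_simps)
    finally show "real (card (unique_classes P n)) / real (card (iso_classes n)) \<le> ?b n" .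
  qed
qed simp

theorem theorem2:
  shows "weakly_distinguishing ind_poly \<and> weakly_distinguishing clique_poly"
proof
  show "weakly_distinguishing ind_poly"
    by (rule weakly_distinguishing_if_hereditary[OF _ hereditary_is_indep card_graphs_with_indep_le])
      (simp add: ind_poly_def indep_count_def subset_count_def)
  show "weakly_distinguishing clique_poly"
    by (rule weakly_distinguishing_if_hereditary[OF _ hereditary_is_clique card_graphs_with_clique_le])
      (simp add: clique_poly_def clique_count_def subset_count_def)
qed

end
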